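(* Let $K$ be a field and let $M_1,\dots,M_r$ be Galois extensions of $K$ inside a common algebraic closure such that $M_i\not\subseteq M_1\cdots M_{i-1}$ for every $i=1,\dots,r$. Then there exists $\sigma\in\mathrm{Gal}(M_1\cdots M_r/K)$ such that $\sigma|_{M_i}\neq1$ for every $i$. *)

theory Defs
  imports "HOL-Computational_Algebra.Polynomial"
begin

text \<open>Subfields of an ambient field type 'a (playing the role of the common algebraic closure).\<close>
definition subfield :: "'a::field set \<Rightarrow> bool" where
  "subfield F \<longleftrightarrow> 0 \<in> F \<and> 1 \<in> F \<and> (\<forall>x\<in>F. \<forall>y\<in>F. x + y \<in> F \<and> x * y \<in> F)
     \<and> (\<forall>x\<in>F. - x \<in> F) \<and> (\<forall>x\<in>F. x \<noteq> 0 \<longrightarrow> inverse x \<in> F)"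

definition poly_over :: "'a::field set \<Rightarrow> 'a poly \<Rightarrow> bool" where
  "poly_over K p \<longleftrightarrow> set (coeffs p) \<subseteq> K"

definition algebraic_over :: "'a::field set \<Rightarrow> 'a \<Rightarrow> bool" where
  "algebraic_over K x \<longleftrightarrow> (\<exists>p. p \<noteq> 0 \<and> poly_over K p \<and> poly p x = 0)"

definition irreducible_over :: "'a::field set \<Rightarrow> 'a poly \<Rightarrow> bool" where
  "irreducible_over K p \<longleftrightarrow> poly_over K p \<and> degree p \<ge> 1 \<and>
     (\<forall>q s. poly_over K q \<and> poly_over K s \<and> p = q * s \<longrightarrow> degree q = 0 \<or> degree s = 0)"

definition splits_in :: "'a::field set \<Rightarrow> 'a poly \<Rightarrow> bool" where
  "splits_in M p \<longleftrightarrow> (\<exists>c rs. set rs \<subseteq> M \<and> p = smult c (\<Prod>r\<leftarrow>rs. [:- r, 1:]))"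

text \<open>Normal: the minimal polynomial over K (= any irreducible K-polynomial having x as
  a root) of every element of M splits in M.  Separable: that polynomial is separable
  (coprime to its derivative).\<close>
definition normal_ext :: "'a::field set \<Rightarrow> 'a set \<Rightarrow> bool" where
  "normal_ext K M \<longleftrightarrow> (\<forall>x\<in>M. \<forall>p. irreducible_over K p \<and> poly p x = 0 \<longrightarrow> splits_in M p)"

definition separable_ext :: "'a::field set \<Rightarrow> 'a set \<Rightarrow> bool" where
  "separable_ext K M \<longleftrightarrow> (\<forall>x\<in>M. \<forall>p. irreducible_over K p \<and> poly p x = 0 \<longrightarrow> coprime p (pderiv p))"

definition galois_ext :: "'a::field set \<Rightarrow> 'a set \<Rightarrow> bool" where
  "galois_ext K M \<longleftrightarrow> subfield K \<and> subfield M \<and> K \<subseteq> M \<and>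
     (\<forall>x\<in>M. algebraic_over K x) \<and> normal_ext K M \<and> separable_ext K M"

definition algebraic_closure_of :: "'a::field set \<Rightarrow> bool" where
  "algebraic_closure_of K \<longleftrightarrow> subfield K \<and> (\<forall>x. algebraic_over K x) \<and>
     (\<forall>p::'a poly. degree p \<ge> 1 \<longrightarrow> (\<exists>x. poly p x = 0))"

definition compositum :: "'a::field set \<Rightarrow> 'a set set \<Rightarrow> 'a set" where
  "compositum K \<M> = \<Inter>{F. subfield F \<and> K \<subseteq> F \<and> \<Union>\<M> \<subseteq> F}"

definition gal_aut :: "'a::field set \<Rightarrow> 'a set \<Rightarrow> ('a \<Rightarrow> 'a) \<Rightarrow> bool" where
  "gal_aut K L \<sigma> \<longleftrightarrow> bij_betw \<sigma> L L \<and>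
     (\<forall>x\<in>L. \<forall>y\<in>L. \<sigma> (x + y) = \<sigma> x + \<sigma> y \<and> \<sigma> (x * y) = \<sigma> x * \<sigma> y) \<and>
     (\<forall>k\<in>K. \<sigma> k = k)"

end

theory Submission
  imports Defs
begin

text \<open>
  We work with field endomorphisms of the algebraic closure that fix K. Each of them maps
  a normal extension onto itself (it permutes the roots of every minimal polynomial), hence
  restricts to an element of Gal(M_1 \<cdots> M_r / K). Such a \<sigma> moving M_1, \<dots>, M_i is built
  by induction on i. If \<sigma> fixes M_i pointwise, pick y \<in> M_i outside C = M_1 \<cdots> M_{i-1}.
  The minimal polynomial of y over C has degree at least 2 and is separable, so it has a
  root y' \<noteq> y; the C-embedding y \<mapsto> y' extends, by Zorn's lemma, to an endomorphism \<psi>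
  of the closure fixing C. Then \<sigma> \<circ> \<psi> agrees with \<sigma> on C, so it still moves
  M_1, \<dots>, M_{i-1}, and it moves y because \<psi> y lies in M_i, where \<sigma> is the identity.
\<close>

definition subring :: "'a::field set \<Rightarrow> bool" where
  "subring S \<longleftrightarrow> 0 \<in> S \<and> 1 \<in> S \<and> (\<forall>x\<in>S. \<forall>y\<in>S. x + y \<in> S \<and> x * y \<in> S) \<and> (\<forall>x\<in>S. - x \<in> S)"

lemma subringD:
  assumes "subring S"
  shows "0 \<in> S" "1 \<in> S" "x \<in> S \<Longrightarrow> y \<in> S \<Longrightarrow> x + y \<in> S" "x \<in> S \<Longrightarrow> y \<in> S \<Longrightarrow> x * y \<in> S"
    "x \<in> S \<Longrightarrow> - x \<in> S" "x \<in> S \<Longrightarrow> y \<in> S \<Longrightarrow> x - y \<in> S"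
  using assms unfolding subring_def by (simp_all add: diff_conv_add_uminus del: add_uminus_conv_diff)

lemma subfield_imp_subring: "subfield F \<Longrightarrow> subring F"
  by (simp add: subfield_def subring_def)

lemma subfieldD:
  assumes "subfield F"
  shows "0 \<in> F" "1 \<in> F" "x \<in> F \<Longrightarrow> y \<in> F \<Longrightarrow> x + y \<in> F" "x \<in> F \<Longrightarrow> y \<in> F \<Longrightarrow> x * y \<in> F"
    "x \<in> F \<Longrightarrow> - x \<in> F" "x \<in> F \<Longrightarrow> y \<in> F \<Longrightarrow> x - y \<in> F" "x \<in> F \<Longrightarrow> inverse x \<in> F"
  using subringD[OF subfield_imp_subring[OF assms]] assms
  by (auto simp: subfield_def)

lemma subfield_UNIV: "subfield UNIV"
  by (simp add: subfield_def)

lemma subring_sum: "subring S \<Longrightarrow> (\<And>i. i \<in> A \<Longrightarrow> f i \<in> S) \<Longrightarrow> sum f A \<in> S"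
  by (induction A rule: infinite_finite_induct) (auto intro: subringD)

lemma subfield_Inter: "(\<And>F. F \<in> \<F> \<Longrightarrow> subfield F) \<Longrightarrow> subfield (\<Inter>\<F>)"
  by (simp add: subfield_def)

lemma subfield_chain_Union:
  assumes "\<F> \<noteq> {}" "\<And>F. F \<in> \<F> \<Longrightarrow> subfield F"
    and chain: "\<And>F G. F \<in> \<F> \<Longrightarrow> G \<in> \<F> \<Longrightarrow> F \<subseteq> G \<or> G \<subseteq> F"
  shows "subfield (\<Union>\<F>)"
proof -
  have "\<exists>H\<in>\<F>. x \<in> H \<and> y \<in> H" if "x \<in> \<Union>\<F>" "y \<in> \<Union>\<F>" for x y
    using that chain by blast
  then show ?thesis
    using assms(1,2) unfolding subfield_def by (meson UnionI all_not_in_conv)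
qed

lemma subfield_compositum: "subfield (compositum K \<M>)"
  unfolding compositum_def by (rule subfield_Inter) blast

lemma subset_compositum: "K \<subseteq> compositum K \<M>" "N \<in> \<M> \<Longrightarrow> N \<subseteq> compositum K \<M>"
  unfolding compositum_def by blast+

lemma compositum_least: "subfield F \<Longrightarrow> K \<subseteq> F \<Longrightarrow> \<Union>\<M> \<subseteq> F \<Longrightarrow> compositum K \<M> \<subseteq> F"
  unfolding compositum_def by blast

lemma poly_over_coeff_iff:
  assumes "0 \<in> S"
  shows "poly_over S p \<longleftrightarrow> (\<forall>n. coeff p n \<in> S)"
proof
  assume "poly_over S p"
  then show "\<forall>n. coeff p n \<in> S"
    using assms unfolding poly_over_def by (metis coeff_0 coeff_in_coeffs le_degree subsetD)
next
  assume "\<forall>n. coeff p n \<in> S"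
  then show "poly_over S p"
    unfolding poly_over_def coeffs_def by (clarsimp simp del: upt_Suc)
qed

lemma poly_over_mono: "poly_over S p \<Longrightarrow> S \<subseteq> T \<Longrightarrow> poly_over T p"
  by (auto simp: poly_over_def)

lemma poly_over_0: "poly_over S 0"
  by (simp add: poly_over_def)

lemma poly_over_pCons: "0 \<in> S \<Longrightarrow> poly_over S (pCons a p) \<longleftrightarrow> a \<in> S \<and> poly_over S p"
  by (auto simp: poly_over_coeff_iff coeff_pCons split: nat.splits)

lemma poly_over_const: "0 \<in> S \<Longrightarrow> a \<in> S \<Longrightarrow> poly_over S [:a:]"
  by (simp add: poly_over_pCons poly_over_0)

lemma poly_over_monom: "0 \<in> S \<Longrightarrow> a \<in> S \<Longrightarrow> poly_over S (monom a n)"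
  by (simp add: poly_over_coeff_iff coeff_monom)

lemma poly_over_X: "subring S \<Longrightarrow> poly_over S [:0, 1:]"
  by (simp add: poly_over_pCons poly_over_0 subringD)

lemma
  assumes "subring S" "poly_over S p" "poly_over S q"
  shows poly_over_add: "poly_over S (p + q)"
    and poly_over_diff: "poly_over S (p - q)"
    and poly_over_uminus: "poly_over S (- p)"
    and poly_over_mult: "poly_over S (p * q)"
  using assms subringD[OF assms(1)]
  by (auto simp: poly_over_coeff_iff coeff_mult intro!: subring_sum)

lemma poly_mem_subring: "subring S \<Longrightarrow> poly_over S p \<Longrightarrow> a \<in> S \<Longrightarrow> poly p a \<in> S"
  by (induction p) (auto simp: poly_over_pCons subringD)

definition hom_on :: "'a::field set \<Rightarrow> ('a \<Rightarrow> 'a) \<Rightarrow> bool" where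
  "hom_on R f \<longleftrightarrow> f 1 = 1 \<and> (\<forall>a\<in>R. \<forall>b\<in>R. f (a + b) = f a + f b \<and> f (a * b) = f a * f b)"

lemma hom_onD:
  "hom_on R f \<Longrightarrow> f 1 = 1"
  "hom_on R f \<Longrightarrow> a \<in> R \<Longrightarrow> b \<in> R \<Longrightarrow> f (a + b) = f a + f b"
  "hom_on R f \<Longrightarrow> a \<in> R \<Longrightarrow> b \<in> R \<Longrightarrow> f (a * b) = f a * f b"
  by (simp_all add: hom_on_def)

lemma
  assumes "subfield R" "hom_on R f"
  shows hom_on_0: "f 0 = 0"
    and hom_on_uminus: "a \<in> R \<Longrightarrow> f (- a) = - f a"
    and hom_on_diff: "a \<in> R \<Longrightarrow> b \<in> R \<Longrightarrow> f (a - b) = f a - f b"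
    and hom_on_inverse: "a \<in> R \<Longrightarrow> f (inverse a) = inverse (f a)"
    and hom_on_eq_0_iff: "a \<in> R \<Longrightarrow> f a = 0 \<longleftrightarrow> a = 0"
proof -
  note R = subfieldD[OF assms(1)] and f = hom_onD[OF assms(2)]
  show f0: "f 0 = 0"
    using f(2)[of 0 0] R(1) by (metis add.right_neutral add_left_cancel)
  show fneg: "f (- a) = - f a" if "a \<in> R" for a
    using f(2)[of a "- a"] R(5) that f0 by (simp add: add_eq_0_iff2)
  show "a \<in> R \<Longrightarrow> b \<in> R \<Longrightarrow> f (a - b) = f a - f b"
    using f(2)[of a "- b"] R(5) fneg by simp
  have finv: "f a * f (inverse a) = 1" if "a \<in> R" "a \<noteq> 0" for a
    using f(3)[of a "inverse a"] f(1) R(7) that by simp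
  show "a \<in> R \<Longrightarrow> f (inverse a) = inverse (f a)"
    using finv f0 by (metis inverse_unique inverse_zero)
  show "a \<in> R \<Longrightarrow> f a = 0 \<longleftrightarrow> a = 0"
    using finv f0 by force
qed

lemma hom_on_sum:
  assumes "subfield R" "hom_on R f" "\<And>i. i \<in> A \<Longrightarrow> g i \<in> R"
  shows "f (sum g A) = (\<Sum>i\<in>A. f (g i))"
  using assms(3)
proof (induction A rule: infinite_finite_induct)
  case (insert i A)
  then have "sum g A \<in> R"
    by (intro subring_sum subfield_imp_subring assms(1)) auto
  then show ?case
    using insert hom_onD(2)[OF assms(2)] by simp
qed (simp_all add: hom_on_0[OF assms(1,2)])

lemma
  assumes "subfield R" "hom_on R f" "poly_over R p" "poly_over R q"
  shows map_poly_add_hom_on: "map_poly f (p + q) = map_poly f p + map_poly f q"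
    and map_poly_diff_hom_on: "map_poly f (p - q) = map_poly f p - map_poly f q"
    and map_poly_mult_hom_on: "map_poly f (p * q) = map_poly f p * map_poly f q"
proof -
  have f0: "f 0 = 0" by (rule hom_on_0[OF assms(1,2)])
  have coeffs: "coeff p n \<in> R" "coeff q n \<in> R" for n
    using assms(3,4) poly_over_coeff_iff subfieldD(1)[OF assms(1)] by blast+
  show "map_poly f (p + q) = map_poly f p + map_poly f q"
    by (rule poly_eqI) (simp add: coeff_map_poly f0 hom_onD(2)[OF assms(2) coeffs])
  show "map_poly f (p - q) = map_poly f p - map_poly f q"
    by (rule poly_eqI) (simp add: coeff_map_poly f0 hom_on_diff[OF assms(1,2) coeffs])
  show "map_poly f (p * q) = map_poly f p * map_poly f q"
    by (rule poly_eqI)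
      (simp add: coeff_map_poly f0 coeff_mult hom_on_sum[OF assms(1,2)] subfieldD(4)[OF assms(1)]
        coeffs hom_onD(3)[OF assms(2) coeffs])
qed

lemma poly_map_poly_hom_on:
  assumes "subfield R" "hom_on R f" "poly_over R p" "a \<in> R"
  shows "f (poly p a) = poly (map_poly f p) (f a)"
  using assms(3)
proof (induction p)
  case (pCons c p)
  then have "c \<in> R" "poly_over R p"
    using poly_over_pCons subfieldD(1)[OF assms(1)] by blast+
  moreover have "poly p a \<in> R"
    using assms(1,4) calculation(2) by (intro poly_mem_subring subfield_imp_subring)
  ultimately show ?case
    using pCons.IH assms(4) subfieldD(4)[OF assms(1)] hom_on_0[OF assms(1,2)]
    by (simp add: map_poly_pCons hom_onD(2,3)[OF assms(2)])
qed (simp add: hom_on_0[OF assms(1,2)])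

lemma map_poly_fixing: "(\<forall>k\<in>K. f k = k) \<Longrightarrow> poly_over K p \<Longrightarrow> map_poly f p = p"
  by (rule map_poly_idI) (auto simp: poly_over_def)

section \<open>Minimal polynomials\<close>

lemma algebraic_over_mono: "algebraic_over R a \<Longrightarrow> R \<subseteq> S \<Longrightarrow> algebraic_over S a"
  by (auto simp: algebraic_over_def intro: poly_over_mono)

lemma monic_cancel_lead_coeff:
  assumes R: "subring R" and p: "poly_over R p" "lead_coeff p = 1"
    and q: "poly_over R q" "q \<noteq> 0" "degree p \<le> degree q"
  obtains m where "poly_over R m" "q - p * m = 0 \<or> degree (q - p * m) < degree q"
proof -
  define m where "m = monom (lead_coeff q) (degree q - degree p)"
  have "lead_coeff q \<in> R"
    using q(1) poly_over_coeff_iff subringD(1)[OF R] by blast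
  then have m: "poly_over R m"
    unfolding m_def by (intro poly_over_monom subringD(1)[OF R])
  have "p \<noteq> 0" "m \<noteq> 0"
    using p(2) q(2) by (auto simp: m_def)
  then have deg: "degree (p * m) = degree q"
    using q(3) by (simp add: degree_mult_eq m_def degree_monom_eq)
  have "lead_coeff (p * m) = lead_coeff q"
    using q(2) by (simp only: lead_coeff_mult) (simp add: p(2) m_def degree_monom_eq)
  with deg have "degree (q - p * m) \<le> degree q" "coeff (q - p * m) (degree q) = 0"
    by (simp_all add: degree_diff_le)
  then have "q - p * m = 0 \<or> degree (q - p * m) < degree q"
    by (metis le_neq_implies_less leading_coeff_0_iff)
  with m show thesis
    by (rule that)
qed

lemma monic_division_over:
  assumes R: "subring R" and p: "poly_over R p" "lead_coeff p = 1" and "poly_over R q"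
  shows "\<exists>s t. poly_over R s \<and> poly_over R t \<and> q = p * s + t \<and> (t = 0 \<or> degree t < degree p)"
  using \<open>poly_over R q\<close>
proof (induction "degree q" arbitrary: q rule: less_induct)
  case less
  show ?case
  proof (cases "q \<noteq> 0 \<and> degree p \<le> degree q")
    case False
    then show ?thesis
      using less.prems poly_over_0 by (intro exI[of _ 0] exI[of _ q]) auto
  next
    case True
    then obtain m where m: "poly_over R m" and q': "q - p * m = 0 \<or> degree (q - p * m) < degree q"
      using monic_cancel_lead_coeff[OF R p less.prems] by blast
    have "poly_over R (q - p * m)"
      by (intro poly_over_diff poly_over_mult R p(1) m less.prems)
    with q' less.hyps obtain s t where "poly_over R s" "poly_over R t" "q - p * m = p * s + t"
      "t = 0 \<or> degree t < degree p"
      using poly_over_0 by (metis add_0 mult_zero_right)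
    moreover from this have "q = p * (s + m) + t"
      by (simp add: algebra_simps)
    ultimately show ?thesis
      using poly_over_add[OF R _ m] by blast
  qed
qed

definition is_minpoly :: "'a::field set \<Rightarrow> 'a \<Rightarrow> 'a poly \<Rightarrow> bool" where
  "is_minpoly R z p \<longleftrightarrow> poly_over R p \<and> lead_coeff p = 1 \<and> poly p z = 0 \<and>
     (\<forall>q. poly_over R q \<and> q \<noteq> 0 \<and> poly q z = 0 \<longrightarrow> degree p \<le> degree q)"

lemma minpoly_exists:
  assumes "subfield R" "algebraic_over R z"
  shows "\<exists>p. is_minpoly R z p"
proof -
  obtain p where p: "p \<noteq> 0" "poly_over R p" "poly p z = 0"
    and least: "\<And>q. q \<noteq> 0 \<and> poly_over R q \<and> poly q z = 0 \<Longrightarrow> degree p \<le> degree q"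
    using assms(2) ex_has_least_nat[of "\<lambda>p. p \<noteq> 0 \<and> poly_over R p \<and> poly p z = 0" _ degree]
    unfolding algebraic_over_def by blast
  have "lead_coeff p \<in> R"
    using p poly_over_coeff_iff subfieldD(1)[OF assms(1)] by blast
  then have "poly_over R (smult (inverse (lead_coeff p)) p)"
    using p(2) subfieldD[OF assms(1)]
    by (auto simp: poly_over_coeff_iff)
  then have "is_minpoly R z (smult (inverse (lead_coeff p)) p)"
    using p least by (auto simp: is_minpoly_def)
  then show ?thesis ..
qed

lemma minpoly_nonzero: "is_minpoly R z p \<Longrightarrow> p \<noteq> 0"
  by (auto simp: is_minpoly_def)

lemma minpoly_degree_pos: "is_minpoly R z p \<Longrightarrow> degree p \<ge> 1"
proof (rule ccontr)
  assume p: "is_minpoly R z p" and "\<not> degree p \<ge> 1"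
  then have "degree p = 0"
    by simp
  moreover from this p have "coeff p 0 = 1"
    by (simp add: is_minpoly_def)
  ultimately have "p = [:1:]"
    by (metis degree_0_id)
  then show False
    using p by (simp add: is_minpoly_def)
qed

lemma minpoly_dvd:
  assumes "subring R" "is_minpoly R z p" "poly_over R q" "poly q z = 0"
  shows "\<exists>s. poly_over R s \<and> q = p * s"
proof -
  have p: "poly_over R p" "lead_coeff p = 1" "poly p z = 0"
    using assms(2) by (auto simp: is_minpoly_def)
  obtain s t where st: "poly_over R s" "poly_over R t" "q = p * s + t" "t = 0 \<or> degree t < degree p"
    using monic_division_over[OF assms(1) p(1,2) assms(3)] by blast
  have "poly t z = 0"
    using st(3) p(3) assms(4) by simp
  then have "t = 0"
    using st(2,4) assms(2) by (auto simp: is_minpoly_def leD)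
  then show ?thesis
    using st by auto
qed

lemma minpoly_irreducible:
  assumes "is_minpoly K x P"
  shows "irreducible_over K P"
  unfolding irreducible_over_def
proof (intro conjI allI impI)
  show "poly_over K P" "1 \<le> degree P"
    using assms minpoly_degree_pos by (auto simp: is_minpoly_def)
next
  fix q s
  assume qs: "poly_over K q \<and> poly_over K s \<and> P = q * s"
  then have "q \<noteq> 0" "s \<noteq> 0"
    using minpoly_nonzero[OF assms] by auto
  moreover have "poly q x = 0 \<or> poly s x = 0"
    using qs assms by (simp add: is_minpoly_def)
  ultimately have "degree P \<le> degree q \<or> degree P \<le> degree s"
    using qs assms unfolding is_minpoly_def by blast
  then show "degree q = 0 \<or> degree s = 0"
    using qs \<open>q \<noteq> 0\<close> \<open>s \<noteq> 0\<close> by (auto simp: degree_mult_eq)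
qed

lemma minpoly_degree_one_mem:
  assumes "subring R" "is_minpoly R z p" "degree p = 1"
  shows "z \<in> R"
proof -
  define c where "c = coeff p 0"
  have p: "poly_over R p" "lead_coeff p = 1" "poly p z = 0"
    using assms(2) by (auto simp: is_minpoly_def)
  have "p = [:c, 1:]"
    using p(2) assms(3) by (intro poly_eqI) (auto simp: c_def coeff_pCons coeff_eq_0 split: nat.splits)
  then have "z = - c"
    using p(3) by (simp add: eq_neg_iff_add_eq_0 add.commute)
  moreover have "c \<in> R"
    using p(1) poly_over_coeff_iff subringD(1)[OF assms(1)] by (auto simp: c_def)
  ultimately show ?thesis
    using subringD(5)[OF assms(1)] by simp
qed

lemma square_dvd_imp_dvd_pderiv:
  fixes p q :: "'a::idom poly"
  assumes "q ^ 2 dvd p"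
  shows "q dvd pderiv p"
proof -
  obtain s where "p = q * q * s"
    using assms by (auto simp: power2_eq_square elim: dvdE)
  then have "pderiv p = q * (q * pderiv s + 2 * s * pderiv q)"
    by (simp add: pderiv_mult algebra_simps)
  then show ?thesis
    by simp
qed

lemma coprime_pderiv_square_dvd_unit:
  fixes p q :: "'a::field poly"
  assumes "coprime p (pderiv p)" "q ^ 2 dvd p"
  shows "is_unit q"
proof -
  have "q dvd q ^ 2"
    by (rule dvd_power) simp
  then show ?thesis
    using coprime_common_divisor[OF assms(1) dvd_trans square_dvd_imp_dvd_pderiv[OF assms(2)]]
      assms(2) by blast
qed

lemma minpoly_other_root:
  fixes x :: "'a::field"
  assumes C: "subring C" and p: "is_minpoly C x p" and x: "x \<notin> C"
    and "p dvd P" and sep: "coprime P (pderiv P)"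
    and closed: "\<And>q::'a poly. degree q \<ge> 1 \<Longrightarrow> \<exists>y. poly q y = 0"
  shows "\<exists>y. poly p y = 0 \<and> y \<noteq> x"
proof -
  obtain s where P_eq: "P = p * s"
    using \<open>p dvd P\<close> by (rule dvdE)
  obtain h where h: "p = [:- x, 1:] * h"
    using p by (auto simp: is_minpoly_def poly_eq_0_iff_dvd elim: dvdE)
  have "h \<noteq> 0"
    using minpoly_nonzero[OF p] h by auto
  then have "degree p = degree [:- x, 1:] + degree h"
    unfolding h by (intro degree_mult_eq) auto
  moreover have "degree p \<noteq> 1"
    using minpoly_degree_one_mem[OF C p] x by blast
  ultimately have "degree h \<ge> 1"
    using minpoly_degree_pos[OF p] by simp
  then obtain y where y: "poly h y = 0"
    using closed by blast
  \<comment> \<open>x is a simple root of the separable polynomial P, so it is not a root of h\<close>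
  have "y \<noteq> x"
  proof
    assume "y = x"
    then have "[:- x, 1:] dvd h"
      using y by (simp add: poly_eq_0_iff_dvd)
    then obtain k where k: "h = [:- x, 1:] * k"
      by (rule dvdE)
    have "P = [:- x, 1:] ^ 2 * (k * s)"
      by (simp only: P_eq h k power2_eq_square mult.assoc)
    then have "is_unit [:- x, 1:]"
      using coprime_pderiv_square_dvd_unit[OF sep] by (metis dvdI)
    then show False
      using is_unit_iff_degree[of "[:- x, 1:]"] by simp
  qed
  then show ?thesis
    using h y by auto
qed

section \<open>Extending homomorphisms into an algebraically closed field\<close>

definition adjoin :: "'a::field set \<Rightarrow> 'a \<Rightarrow> 'a set" where
  "adjoin R z = {poly g z | g. poly_over R g}"

lemma subset_adjoin:
  assumes "0 \<in> R"
  shows "R \<subseteq> adjoin R z"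
proof
  fix a
  assume "a \<in> R"
  then have "poly [:a:] z \<in> adjoin R z"
    unfolding adjoin_def using poly_over_const[OF assms] by blast
  then show "a \<in> adjoin R z"
    by simp
qed

lemma mem_adjoin:
  assumes "subring R"
  shows "z \<in> adjoin R z"
proof -
  have "poly [:0, 1:] z \<in> adjoin R z"
    unfolding adjoin_def using poly_over_X[OF assms] by blast
  then show ?thesis
    by simp
qed

lemma subring_adjoin:
  assumes "subring R"
  shows "subring (adjoin R z)"
  unfolding subring_def
proof (intro conjI ballI)
  show "0 \<in> adjoin R z" "1 \<in> adjoin R z"
    using subset_adjoin subringD(1,2)[OF assms] by blast+
  fix x y
  assume "x \<in> adjoin R z" "y \<in> adjoin R z"
  then obtain g h where gh: "poly_over R g" "poly_over R h" and "x = poly g z" "y = poly h z"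
    unfolding adjoin_def by blast
  then have "x + y = poly (g + h) z" "x * y = poly (g * h) z" "- x = poly (- g) z"
    by simp_all
  then show "x + y \<in> adjoin R z" "x * y \<in> adjoin R z" "- x \<in> adjoin R z"
    unfolding adjoin_def
    using poly_over_add[OF assms gh] poly_over_mult[OF assms gh] poly_over_uminus[OF assms gh]
    by blast+
qed

lemma inverse_mem_if_algebraic:
  assumes "subfield R" "subring S" "R \<subseteq> S" "a \<in> S" "algebraic_over R a"
  shows "inverse a \<in> S"
proof (cases "a = 0")
  case False
  obtain p where p: "is_minpoly R a p"
    using minpoly_exists[OF assms(1,5)] by blast
  obtain c q where pc: "p = pCons c q"
    by (rule pCons_cases)
  have c: "c \<in> R" and q: "poly_over R q"
    using p pc poly_over_pCons[OF subfieldD(1)[OF assms(1)]] by (auto simp: is_minpoly_def)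
  have "c \<noteq> 0"
  proof
    assume "c = 0"
    then have "q \<noteq> 0" "poly q a = 0" "degree p = Suc (degree q)"
      using p pc False minpoly_nonzero[OF p] by (auto simp: is_minpoly_def)
    then show False
      using p q by (auto simp: is_minpoly_def)
  qed
  have "a * poly q a = - c"
    using p pc by (simp add: is_minpoly_def eq_neg_iff_add_eq_0 add.commute)
  then have "a * (- poly q a * inverse c) = 1"
    using \<open>c \<noteq> 0\<close> by (simp add: mult.assoc[symmetric])
  then have "inverse a = - poly q a * inverse c"
    by (rule inverse_unique)
  moreover have "poly q a \<in> S"
    using poly_mem_subring[OF assms(2) poly_over_mono[OF q assms(3)] assms(4)] .
  moreover have "inverse c \<in> S"
    using c assms(1,3) subfieldD(7) by blast
  ultimately show ?thesis
    using subringD[OF assms(2)] by simp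
qed (use subringD(1)[OF assms(2)] in simp)

lemma subfield_if_algebraic:
  assumes "subfield R" "subring S" "R \<subseteq> S" "\<And>a. a \<in> S \<Longrightarrow> algebraic_over R a"
  shows "subfield S"
  using assms(2) inverse_mem_if_algebraic[OF assms(1-3) _ assms(4)]
  unfolding subfield_def subring_def by blast

lemma eval_map_poly_cong:
  assumes R: "subfield R" and f: "hom_on R f" and p: "is_minpoly R z p"
    and w: "poly (map_poly f p) w = 0"
    and g: "poly_over R g" and h: "poly_over R h" and eq: "poly g z = poly h z"
  shows "poly (map_poly f g) w = poly (map_poly f h) w"
proof -
  have "poly_over R (g - h)" "poly (g - h) z = 0"
    using poly_over_diff[OF subfield_imp_subring[OF R] g h] eq by simp_all
  then obtain s where "poly_over R s" "g - h = p * s"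
    using minpoly_dvd[OF subfield_imp_subring[OF R] p] by blast
  then have "poly (map_poly f (g - h)) w = 0"
    using map_poly_mult_hom_on[OF R f] p w by (simp add: is_minpoly_def)
  then show ?thesis
    using map_poly_diff_hom_on[OF R f g h] by simp
qed

lemma hom_on_extend_adjoin:
  assumes R: "subfield R" and f: "hom_on R f" and p: "is_minpoly R z p"
    and w: "poly (map_poly f p) w = 0"
  shows "\<exists>f'. hom_on (adjoin R z) f' \<and> (\<forall>a\<in>R. f' a = f a) \<and> f' z = w"
proof -
  have f01: "f 0 = 0" "f 1 = 1"
    using hom_on_0[OF R f] hom_onD(1)[OF f] .
  have R_ring: "subring R"
    using R by (rule subfield_imp_subring)
  define f' where "f' a = poly (map_poly f (SOME g. poly_over R g \<and> poly g z = a)) w" for a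
  have f'_poly: "f' (poly g z) = poly (map_poly f g) w" if g: "poly_over R g" for g
  proof -
    define h where "h = (SOME h. poly_over R h \<and> poly h z = poly g z)"
    have h: "poly_over R h" "poly h z = poly g z"
      unfolding h_def using someI[of "\<lambda>h. poly_over R h \<and> poly h z = poly g z" g] g by auto
    then show ?thesis
      using eval_map_poly_cong[OF R f p w g h(1) h(2)[symmetric]] by (simp add: f'_def h_def)
  qed
  have f'_const: "f' a = f a" if "a \<in> R" for a
    using f'_poly[OF poly_over_const[OF subfieldD(1)[OF R] that]] f01 by (simp add: map_poly_pCons)
  have f'_z: "f' z = w"
    using f'_poly[OF poly_over_X[OF R_ring]] f01 by (simp add: map_poly_pCons)
  have "hom_on (adjoin R z) f'"
    unfolding hom_on_def adjoin_def
  proof (safe)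
    show "f' 1 = 1"
      using f'_const f01 subfieldD(2)[OF R] by simp
    fix g h :: "'a poly"
    assume "poly_over R g" "poly_over R h"
    then show "f' (poly g z + poly h z) = f' (poly g z) + f' (poly h z)"
      and "f' (poly g z * poly h z) = f' (poly g z) * f' (poly h z)"
      using f'_poly poly_over_add[OF R_ring] poly_over_mult[OF R_ring]
        map_poly_add_hom_on[OF R f] map_poly_mult_hom_on[OF R f]
      by (metis poly_add poly_mult)+
  qed
  then show ?thesis
    using f'_const f'_z by blast
qed

text \<open>
  Partial homomorphisms are handled through their graphs, so that extension becomes
  inclusion and Zorn's lemma applies to sets ordered by \<open>\<subseteq>\<close>.
\<close>

definition graph_on :: "'a set \<Rightarrow> ('a \<Rightarrow> 'b) \<Rightarrow> ('a \<times> 'b) set" where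
  "graph_on S f = (\<lambda>a. (a, f a)) ` S"

lemma Domain_graph_on [simp]: "Domain (graph_on S f) = S"
  by (force simp: graph_on_def)

lemma graph_on_subset_iff: "graph_on S f \<subseteq> graph_on T g \<longleftrightarrow> S \<subseteq> T \<and> (\<forall>a\<in>S. f a = g a)"
  by (auto simp: graph_on_def)

definition hom_graph :: "('a::field \<times> 'a) set \<Rightarrow> bool" where
  "hom_graph G \<longleftrightarrow> single_valued G \<and> subfield (Domain G) \<and> (1, 1) \<in> G \<and>
     (\<forall>a u b v. (a, u) \<in> G \<longrightarrow> (b, v) \<in> G \<longrightarrow> (a + b, u + v) \<in> G \<and> (a * b, u * v) \<in> G)"

lemma hom_graph_graph_on:
  assumes "subfield S" "hom_on S f"
  shows "hom_graph (graph_on S f)"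
  unfolding hom_graph_def
proof (intro conjI allI impI)
  show "subfield (Domain (graph_on S f))"
    using assms(1) by simp
  show "single_valued (graph_on S f)" "(1, 1) \<in> graph_on S f"
    using subfieldD(2)[OF assms(1)] hom_onD(1)[OF assms(2)]
    by (auto simp: graph_on_def single_valued_def)
  fix a u b v
  assume "(a, u) \<in> graph_on S f" "(b, v) \<in> graph_on S f"
  then have "a \<in> S" "b \<in> S" "u = f a" "v = f b"
    by (auto simp: graph_on_def)
  then show "(a + b, u + v) \<in> graph_on S f" "(a * b, u * v) \<in> graph_on S f"
    using subfieldD(3,4)[OF assms(1)] hom_onD(2,3)[OF assms(2)]
    by (auto simp: graph_on_def image_iff)
qed

lemma hom_graphD:
  assumes "hom_graph G"
  shows "single_valued G" "subfield (Domain G)" "(1, 1) \<in> G"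
    "(a, u) \<in> G \<Longrightarrow> (b, v) \<in> G \<Longrightarrow> (a + b, u + v) \<in> G"
    "(a, u) \<in> G \<Longrightarrow> (b, v) \<in> G \<Longrightarrow> (a * b, u * v) \<in> G"
  using assms unfolding hom_graph_def by blast+

lemma hom_graph_imp_graph_on:
  assumes "hom_graph G"
  shows "\<exists>f. hom_on (Domain G) f \<and> G = graph_on (Domain G) f"
proof -
  define f where "f a = (SOME u. (a, u) \<in> G)" for a
  have "(a, f a) \<in> G" if "a \<in> Domain G" for a
    using that unfolding f_def by (auto intro: someI)
  moreover have "u = v" if "(a, u) \<in> G" "(a, v) \<in> G" for a u v
    using hom_graphD(1)[OF assms] that unfolding single_valued_def by blast
  ultimately have G: "(a, u) \<in> G \<longleftrightarrow> a \<in> Domain G \<and> u = f a" for a u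
    by blast
  have "hom_on (Domain G) f"
    unfolding hom_on_def
  proof (intro conjI ballI)
    show "f 1 = 1"
      using hom_graphD(3)[OF assms] by (simp add: G)
    fix a b
    assume "a \<in> Domain G" "b \<in> Domain G"
    then have "(a, f a) \<in> G" "(b, f b) \<in> G"
      by (simp_all add: G)
    then have "(a + b, f a + f b) \<in> G" "(a * b, f a * f b) \<in> G"
      using hom_graphD(4,5)[OF assms] by blast+
    then show "f (a + b) = f a + f b" "f (a * b) = f a * f b"
      by (simp_all add: G)
  qed
  moreover have "G = graph_on (Domain G) f"
    by (auto simp: graph_on_def G)
  ultimately show ?thesis
    by blast
qed

lemma hom_graph_chain_Union:
  assumes "\<C> \<noteq> {}" "\<And>G. G \<in> \<C> \<Longrightarrow> hom_graph G"
    and chain: "\<And>G H. G \<in> \<C> \<Longrightarrow> H \<in> \<C> \<Longrightarrow> G \<subseteq> H \<or> H \<subseteq> G"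
  shows "hom_graph (\<Union>\<C>)"
proof -
  have common: "\<exists>G\<in>\<C>. x \<in> G \<and> y \<in> G" if "x \<in> \<Union>\<C>" "y \<in> \<Union>\<C>" for x y
    using that chain by blast
  have "subfield (\<Union>(Domain ` \<C>))"
  proof (rule subfield_chain_Union)
    show "F \<subseteq> F' \<or> F' \<subseteq> F" if "F \<in> Domain ` \<C>" "F' \<in> Domain ` \<C>" for F F'
      using that chain Domain_mono by blast
  qed (use assms(1,2) in \<open>auto simp: hom_graph_def\<close>)
  moreover have "single_valued (\<Union>\<C>)"
    unfolding single_valued_def
  proof (intro allI impI)
    fix a u v
    assume "(a, u) \<in> \<Union>\<C>" "(a, v) \<in> \<Union>\<C>"
    then obtain G where "G \<in> \<C>" "(a, u) \<in> G" "(a, v) \<in> G"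
      using common by blast
    then show "u = v"
      using assms(2) unfolding hom_graph_def single_valued_def by blast
  qed
  moreover have "(a + b, u + v) \<in> \<Union>\<C> \<and> (a * b, u * v) \<in> \<Union>\<C>"
    if "(a, u) \<in> \<Union>\<C>" "(b, v) \<in> \<Union>\<C>" for a u b v
    using common[OF that] assms(2) unfolding hom_graph_def by blast
  moreover obtain G where "G \<in> \<C>"
    using assms(1) by blast
  ultimately show ?thesis
    using assms(2) unfolding hom_graph_def Domain_Union by blast
qed

lemma maximal_hom_graph_exists:
  assumes "subfield R" "hom_on R f"
  obtains G where "hom_graph G" "graph_on R f \<subseteq> G" "\<And>H. hom_graph H \<Longrightarrow> G \<subseteq> H \<Longrightarrow> H = G"
proof -
  define \<A> where "\<A> = {G. hom_graph G \<and> graph_on R f \<subseteq> G}"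
  have "\<A> \<noteq> {}"
    using hom_graph_graph_on[OF assms] by (auto simp: \<A>_def)
  moreover have "\<Union>\<C> \<in> \<A>" if \<C>: "\<C> \<noteq> {}" "subset.chain \<A> \<C>" for \<C>
  proof -
    have "\<And>G. G \<in> \<C> \<Longrightarrow> hom_graph G" "\<And>G. G \<in> \<C> \<Longrightarrow> graph_on R f \<subseteq> G"
      "\<And>G H. G \<in> \<C> \<Longrightarrow> H \<in> \<C> \<Longrightarrow> G \<subseteq> H \<or> H \<subseteq> G"
      using \<C>(2) unfolding subset_chain_def \<A>_def by blast+
    then show ?thesis
      using hom_graph_chain_Union[OF \<C>(1)] \<C>(1) unfolding \<A>_def by blast
  qed
  ultimately have "\<exists>G\<in>\<A>. \<forall>H\<in>\<A>. G \<subseteq> H \<longrightarrow> H = G"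
    by (rule subset_Zorn_nonempty)
  then obtain G where "G \<in> \<A>" and max: "\<forall>H\<in>\<A>. G \<subseteq> H \<longrightarrow> H = G"
    by blast
  then have G: "hom_graph G" "graph_on R f \<subseteq> G"
    by (simp_all add: \<A>_def)
  have "H = G" if "hom_graph H" "G \<subseteq> H" for H
  proof -
    have "H \<in> \<A>"
      using that G(2) by (simp add: \<A>_def)
    then show ?thesis
      using max that(2) by blast
  qed
  then show thesis
    using that G by blast
qed

lemma maximal_hom_graph_Domain:
  fixes G :: "('a::field \<times> 'a) set"
  assumes G: "hom_graph G" and max: "\<And>H. hom_graph H \<Longrightarrow> G \<subseteq> H \<Longrightarrow> H = G"
    and alg: "\<And>a. algebraic_over (Domain G) a"
    and closed: "\<And>p::'a poly. degree p \<ge> 1 \<Longrightarrow> \<exists>x. poly p x = 0"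
  shows "Domain G = UNIV"
proof (rule ccontr)
  obtain D g where g: "hom_on D g" and G_eq: "G = graph_on D g"
    using hom_graph_imp_graph_on[OF G] by blast
  have D: "subfield D" and alg_D: "\<And>a. algebraic_over D a"
    using hom_graphD(2)[OF G] alg by (simp_all add: G_eq)
  assume "Domain G \<noteq> UNIV"
  then obtain z where "z \<notin> D"
    by (auto simp: G_eq)
  obtain p where p: "is_minpoly D z p"
    using minpoly_exists[OF D alg_D] by blast
  have "coeff (map_poly g p) (degree p) = 1"
    using p hom_on_0[OF D g] hom_onD(1)[OF g] by (simp add: coeff_map_poly is_minpoly_def)
  then have "degree (map_poly g p) \<ge> 1"
    using minpoly_degree_pos[OF p] le_degree[of "map_poly g p" "degree p"] by simp
  then obtain w where "poly (map_poly g p) w = 0"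
    using closed by blast
  then obtain g' where g': "hom_on (adjoin D z) g'" "\<forall>a\<in>D. g' a = g a"
    using hom_on_extend_adjoin[OF D g p] by blast
  have D_sub: "D \<subseteq> adjoin D z"
    using subset_adjoin subfieldD(1)[OF D] by blast
  have "subfield (adjoin D z)"
    using subfield_if_algebraic[OF D subring_adjoin[OF subfield_imp_subring[OF D]] D_sub]
      algebraic_over_mono[OF alg_D] by blast
  then have "hom_graph (graph_on (adjoin D z) g')"
    using g'(1) by (rule hom_graph_graph_on)
  moreover have "G \<subseteq> graph_on (adjoin D z) g'"
    using D_sub g'(2) by (simp add: G_eq graph_on_subset_iff)
  ultimately have "graph_on (adjoin D z) g' = G"
    by (rule max)
  then have "adjoin D z = D"
    using Domain_graph_on G_eq by metis
  then show False
    using mem_adjoin[OF subfield_imp_subring[OF D]] \<open>z \<notin> D\<close> by blast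
qed

lemma hom_on_extend_UNIV:
  fixes R :: "'a::field set"
  assumes R: "subfield R" and f: "hom_on R f"
    and alg: "\<And>a. algebraic_over R a"
    and closed: "\<And>p::'a poly. degree p \<ge> 1 \<Longrightarrow> \<exists>x. poly p x = 0"
  shows "\<exists>g. hom_on UNIV g \<and> (\<forall>a\<in>R. g a = f a)"
proof -
  obtain G where G: "hom_graph G" "graph_on R f \<subseteq> G"
    and max: "\<And>H. hom_graph H \<Longrightarrow> G \<subseteq> H \<Longrightarrow> H = G"
    using maximal_hom_graph_exists[OF R f] by blast
  obtain D g where g: "hom_on D g" and G_eq: "G = graph_on D g"
    using hom_graph_imp_graph_on[OF G(1)] by blast
  have R_D: "R \<subseteq> D" and g_f: "\<forall>a\<in>R. g a = f a"
    using G(2) by (simp_all add: G_eq graph_on_subset_iff)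
  have "Domain G = UNIV"
  proof (rule maximal_hom_graph_Domain[OF G(1) max _ closed])
    show "algebraic_over (Domain G) a" for a
      using algebraic_over_mono[OF alg R_D] by (simp add: G_eq)
  qed
  then have "D = UNIV"
    by (simp add: G_eq)
  then show ?thesis
    using g g_f by blast
qed

lemma exists_hom_fixing_sending:
  fixes C :: "'a::field set"
  assumes C: "subfield C" and alg: "\<And>a. algebraic_over C a"
    and closed: "\<And>q::'a poly. degree q \<ge> 1 \<Longrightarrow> \<exists>y. poly q y = 0"
    and p: "is_minpoly C x p" and y: "poly p y = 0"
  shows "\<exists>g. hom_on UNIV g \<and> (\<forall>c\<in>C. g c = c) \<and> g x = y"
proof -
  have "hom_on C id"
    by (simp add: hom_on_def)
  moreover have "poly (map_poly id p) y = 0"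
    using y by simp
  ultimately obtain f where f: "hom_on (adjoin C x) f" "\<forall>c\<in>C. f c = c" "f x = y"
    using hom_on_extend_adjoin[OF C _ p, of id y] by auto
  have C_sub: "C \<subseteq> adjoin C x"
    using subset_adjoin subfieldD(1)[OF C] by blast
  have "subfield (adjoin C x)"
    using subfield_if_algebraic[OF C subring_adjoin[OF subfield_imp_subring[OF C]] C_sub] alg
    by blast
  then obtain g where g: "hom_on UNIV g" "\<forall>a\<in>adjoin C x. g a = f a"
    using hom_on_extend_UNIV[OF _ f(1) _ closed] algebraic_over_mono[OF alg C_sub] by blast
  have "\<forall>c\<in>C. g c = c"
    using g(2) f(2) C_sub by auto
  moreover have "g x = y"
    using g(2) f(3) mem_adjoin[OF subfield_imp_subring[OF C]] by simp
  ultimately show ?thesis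
    using g(1) by blast
qed

section \<open>Endomorphisms of the closure and Galois extensions\<close>

lemma hom_on_UNIV_inj: "hom_on UNIV f \<Longrightarrow> inj f"
  by (rule injI) (metis hom_on_diff[OF subfield_UNIV] hom_on_eq_0_iff[OF subfield_UNIV] UNIV_I
      right_minus_eq)

lemma hom_on_UNIV_comp: "hom_on UNIV f \<Longrightarrow> hom_on UNIV g \<Longrightarrow> hom_on UNIV (f \<circ> g)"
  by (simp add: hom_on_def)

lemma
  assumes "hom_on UNIV f" "subfield L"
  shows subfield_image_hom: "subfield (f ` L)"
    and subfield_vimage_hom: "subfield (f -` L)"
proof -
  note f = hom_onD[OF assms(1)] hom_on_0[OF subfield_UNIV assms(1)]
    hom_on_uminus[OF subfield_UNIV assms(1)] hom_on_inverse[OF subfield_UNIV assms(1)]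
  note L = subfieldD[OF assms(2)]
  show "subfield (f -` L)"
    unfolding subfield_def
  proof (intro conjI ballI impI)
    show "0 \<in> f -` L" "1 \<in> f -` L"
      using f L by simp_all
    fix x y
    assume "x \<in> f -` L" "y \<in> f -` L"
    then show "x + y \<in> f -` L" "x * y \<in> f -` L" "- x \<in> f -` L" "inverse x \<in> f -` L"
      using f L by simp_all
  qed
  show "subfield (f ` L)"
    unfolding subfield_def
  proof (intro conjI ballI impI)
    show "0 \<in> f ` L" "1 \<in> f ` L"
      using image_eqI[of 0 f 0 L] image_eqI[of 1 f 1 L] f L by simp_all
    fix x y
    assume "x \<in> f ` L" "y \<in> f ` L"
    then obtain a b where ab: "a \<in> L" "b \<in> L" "x = f a" "y = f b"
      by blast
    show "x + y \<in> f ` L"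
      using image_eqI[of _ f "a + b"] ab f L by simp
    show "x * y \<in> f ` L"
      using image_eqI[of _ f "a * b"] ab f L by simp
    show "- x \<in> f ` L"
      using image_eqI[of _ f "- a"] ab f L by simp
    show "inverse x \<in> f ` L"
      using image_eqI[of _ f "inverse a"] ab f L by simp
  qed
qed

lemma hom_fixing_maps_root:
  assumes "hom_on UNIV f" "\<forall>k\<in>K. f k = k" "poly_over K p" "poly p z = 0"
  shows "poly p (f z) = 0"
proof -
  have "poly p (f z) = f (poly p z)"
    using poly_map_poly_hom_on[OF subfield_UNIV assms(1) poly_over_mono[OF assms(3)]]
      map_poly_fixing[OF assms(2,3)] by simp
  then show ?thesis
    using assms(4) hom_on_0[OF subfield_UNIV assms(1)] by simp
qed

lemma poly_prod_linear: "poly (\<Prod>r\<leftarrow>rs. [:- r, 1:]) (a::'a::field) = (\<Prod>r\<leftarrow>rs. a - r)"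
  by (simp add: poly_prod_list[simplified] o_def)

lemma splits_in_root_mem:
  assumes "splits_in N p" "p \<noteq> 0" "poly p a = 0"
  shows "a \<in> N"
proof -
  obtain c rs where "set rs \<subseteq> N" "p = smult c (\<Prod>r\<leftarrow>rs. [:- r, 1:])"
    using assms(1) by (auto simp: splits_in_def)
  then show ?thesis
    using assms(2,3) by (auto simp: poly_prod_linear prod_list_zero_iff)
qed

lemma hom_image_galois_ext:
  assumes N: "galois_ext K N" and f: "hom_on UNIV f" "\<forall>k\<in>K. f k = k"
  shows "f ` N = N"
proof -
  have minpoly: "\<exists>P. is_minpoly K z P" if "z \<in> N" for z
    using N that by (intro minpoly_exists) (auto simp: galois_ext_def)
  have into: "f z \<in> N" if z: "z \<in> N" for z
  proof -
    obtain P where P: "is_minpoly K z P"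
      using minpoly z by blast
    then have "splits_in N P"
      using N z minpoly_irreducible[OF P] by (auto simp: galois_ext_def normal_ext_def is_minpoly_def)
    moreover have "poly P (f z) = 0"
      using hom_fixing_maps_root[OF f] P by (simp add: is_minpoly_def)
    ultimately show ?thesis
      using splits_in_root_mem minpoly_nonzero[OF P] by blast
  qed
  \<comment> \<open>f permutes the finitely many roots in N of the minimal polynomial of z\<close>
  have "z \<in> f ` N" if z: "z \<in> N" for z
  proof -
    obtain P where P: "is_minpoly K z P"
      using minpoly z by blast
    define S where "S = {r \<in> N. poly P r = 0}"
    have "finite S"
      unfolding S_def using poly_roots_finite[OF minpoly_nonzero[OF P]] by simp
    moreover have "f ` S \<subseteq> S"
      unfolding S_def using into hom_fixing_maps_root[OF f] P by (auto simp: is_minpoly_def)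
    moreover have "inj_on f S"
      using hom_on_UNIV_inj[OF f(1)] by (simp add: inj_on_def inj_def)
    ultimately have "f ` S = S"
      by (rule endo_inj_surj)
    moreover have "z \<in> S"
      using z P by (simp add: S_def is_minpoly_def)
    ultimately show ?thesis
      unfolding S_def by blast
  qed
  then show ?thesis
    using into by blast
qed

lemma gal_aut_compositum:
  assumes N: "\<And>j. j \<in> J \<Longrightarrow> galois_ext K (N j)" and f: "hom_on UNIV f" "\<forall>k\<in>K. f k = k"
  shows "gal_aut K (compositum K (N ` J)) f"
proof -
  define L where "L = compositum K (N ` J)"
  have L: "subfield L" "K \<subseteq> L" "\<And>j. j \<in> J \<Longrightarrow> N j \<subseteq> L"
    unfolding L_def
    by (rule subfield_compositum, rule subset_compositum(1), rule subset_compositum(2), rule imageI)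
  have least: "L \<subseteq> F" if "subfield F" "K \<subseteq> F" "\<And>j. j \<in> J \<Longrightarrow> N j \<subseteq> F" for F
    using compositum_least[OF that(1,2), of "N ` J"] that(3) unfolding L_def by blast
  have image: "f ` N j = N j" if "j \<in> J" for j
    using hom_image_galois_ext[OF N[OF that] f] .
  have "L \<subseteq> f -` L"
  proof (rule least)
    show "subfield (f -` L)"
      by (rule subfield_vimage_hom[OF f(1) L(1)])
    show "K \<subseteq> f -` L"
      using L(2) f(2) by auto
    show "N j \<subseteq> f -` L" if "j \<in> J" for j
      using L(3)[OF that] image[OF that] by blast
  qed
  moreover have "L \<subseteq> f ` L"
  proof (rule least)
    show "subfield (f ` L)"
      by (rule subfield_image_hom[OF f(1) L(1)])
    show "K \<subseteq> f ` L"
      using L(2) f(2) by (auto intro: rev_image_eqI)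
    show "N j \<subseteq> f ` L" if "j \<in> J" for j
      using image_mono[OF L(3)[OF that], of f] image[OF that] by blast
  qed
  ultimately have "f ` L = L"
    by blast
  then have "bij_betw f L L"
    using inj_on_subset[OF hom_on_UNIV_inj[OF f(1)]] by (simp add: bij_betw_def)
  then show ?thesis
    using hom_onD(2,3)[OF f(1)] f(2) unfolding gal_aut_def L_def[symmetric] by blast
qed

lemma exists_hom_fixing_moving:
  fixes K :: "'a::field set"
  assumes cl: "algebraic_closure_of K" and N: "galois_ext K N"
    and C: "subfield C" "K \<subseteq> C" and x: "x \<in> N" "x \<notin> C"
  shows "\<exists>f. hom_on UNIV f \<and> (\<forall>c\<in>C. f c = c) \<and> f x \<noteq> x"
proof -
  have K: "subfield K" and alg: "\<And>a. algebraic_over K a"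
    and closed: "\<And>p::'a poly. degree p \<ge> 1 \<Longrightarrow> \<exists>x. poly p x = 0"
    using cl by (simp_all add: algebraic_closure_of_def)
  have algC: "\<And>a. algebraic_over C a"
    using alg C(2) by (rule algebraic_over_mono)
  obtain P where P: "is_minpoly K x P"
    using minpoly_exists[OF K alg] by blast
  have sep: "coprime P (pderiv P)"
    using N x(1) minpoly_irreducible[OF P] P
    by (auto simp: galois_ext_def separable_ext_def is_minpoly_def)
  obtain p where p: "is_minpoly C x p"
    using minpoly_exists[OF C(1) algC] by blast
  have "poly_over C P"
    using P C(2) by (auto simp: is_minpoly_def intro: poly_over_mono)
  then obtain s where "P = p * s"
    using minpoly_dvd[OF subfield_imp_subring[OF C(1)] p] P by (auto simp: is_minpoly_def)
  then have "p dvd P"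
    by (rule dvdI)
  then obtain y where y: "poly p y = 0" "y \<noteq> x"
    using minpoly_other_root[OF subfield_imp_subring[OF C(1)] p x(2) _ sep closed] by blast
  obtain g where "hom_on UNIV g" "\<forall>c\<in>C. g c = c" "g x = y"
    using exists_hom_fixing_sending[OF C(1) algC closed p y(1)] by blast
  then show ?thesis
    using y(2) by blast
qed

lemma exists_hom_agreeing_moving:
  fixes K :: "'a::field set"
  assumes cl: "algebraic_closure_of K" and N: "galois_ext K N"
    and C: "subfield C" "K \<subseteq> C" "\<not> N \<subseteq> C"
    and \<sigma>: "hom_on UNIV \<sigma>" "\<forall>k\<in>K. \<sigma> k = k"
  shows "\<exists>\<tau>. hom_on UNIV \<tau> \<and> (\<forall>k\<in>K. \<tau> k = k) \<and> (\<forall>c\<in>C. \<tau> c = \<sigma> c) \<and> (\<exists>y\<in>N. \<tau> y \<noteq> y)"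
proof (cases "\<exists>y\<in>N. \<sigma> y \<noteq> y")
  case True
  then show ?thesis
    using \<sigma> by blast
next
  case False
  obtain y where y: "y \<in> N" "y \<notin> C"
    using C(3) by blast
  obtain \<psi> where \<psi>: "hom_on UNIV \<psi>" "\<forall>c\<in>C. \<psi> c = c" "\<psi> y \<noteq> y"
    using exists_hom_fixing_moving[OF cl N C(1,2) y] by blast
  have "\<psi> y \<in> N"
    using hom_image_galois_ext[OF N \<psi>(1)] \<psi>(2) C(2) y(1) by blast
  then have "(\<sigma> \<circ> \<psi>) y \<noteq> y"
    using False \<psi>(3) by simp
  moreover have "\<forall>c\<in>C. (\<sigma> \<circ> \<psi>) c = \<sigma> c" "\<forall>k\<in>K. (\<sigma> \<circ> \<psi>) k = k"
    using \<psi>(2) \<sigma>(2) C(2) by auto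
  ultimately show ?thesis
    using hom_on_UNIV_comp[OF \<sigma>(1) \<psi>(1)] y(1) by blast
qed

lemma exists_hom_moving_each:
  fixes K :: "'a::field set" and M :: "nat \<Rightarrow> 'a set"
  assumes cl: "algebraic_closure_of K"
    and gal: "\<And>i. i \<in> {1..n} \<Longrightarrow> galois_ext K (M i)"
    and new: "\<And>i. i \<in> {1..n} \<Longrightarrow> \<not> M i \<subseteq> compositum K (M ` {1..<i})"
  shows "\<exists>\<sigma>. hom_on UNIV \<sigma> \<and> (\<forall>k\<in>K. \<sigma> k = k) \<and> (\<forall>i\<in>{1..n}. \<exists>x\<in>M i. \<sigma> x \<noteq> x)"
  using gal new
proof (induction n)
  case 0
  have "hom_on UNIV id"
    by (simp add: hom_on_def)
  then show ?case
    by auto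
next
  case (Suc n)
  then obtain \<sigma> where \<sigma>: "hom_on UNIV \<sigma>" "\<forall>k\<in>K. \<sigma> k = k" "\<forall>i\<in>{1..n}. \<exists>x\<in>M i. \<sigma> x \<noteq> x"
    by auto
  define C where "C = compositum K (M ` {1..<Suc n})"
  have C: "subfield C" "K \<subseteq> C"
    unfolding C_def by (rule subfield_compositum, rule subset_compositum(1))
  have "\<not> M (Suc n) \<subseteq> C" "galois_ext K (M (Suc n))"
    using Suc.prems by (simp_all add: C_def)
  then obtain \<tau> where \<tau>: "hom_on UNIV \<tau>" "\<forall>k\<in>K. \<tau> k = k" "\<forall>c\<in>C. \<tau> c = \<sigma> c"
    and moves_new: "\<exists>y\<in>M (Suc n). \<tau> y \<noteq> y"
    using exists_hom_agreeing_moving[OF cl _ C _ \<sigma>(1,2)] by blast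
  have "\<exists>x\<in>M i. \<tau> x \<noteq> x" if i: "i \<in> {1..n}" for i
  proof -
    obtain x where x: "x \<in> M i" "\<sigma> x \<noteq> x"
      using \<sigma>(3) i by blast
    have "M i \<subseteq> C"
      unfolding C_def using i by (intro subset_compositum(2)) simp
    then have "\<tau> x = \<sigma> x"
      using \<tau>(3) x(1) by blast
    then show ?thesis
      using x by metis
  qed
  then show ?case
    using \<tau>(1,2) moves_new by (auto simp: atLeastAtMostSuc_conv)
qed

theorem lemma4p6:
  fixes K :: "'a::field set" and M :: "nat \<Rightarrow> 'a set" and r :: nat
  assumes "algebraic_closure_of K"
    and "\<And>i. i \<in> {1..r} \<Longrightarrow> galois_ext K (M i)"
    and "\<And>i. i \<in> {1..r} \<Longrightarrow> \<not> M i \<subseteq> compositum K (M ` {1..<i})"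
  shows "\<exists>\<sigma>. gal_aut K (compositum K (M ` {1..r})) \<sigma> \<and>
           (\<forall>i\<in>{1..r}. \<exists>x\<in>M i. \<sigma> x \<noteq> x)"
proof -
  obtain \<sigma> where \<sigma>: "hom_on UNIV \<sigma>" "\<forall>k\<in>K. \<sigma> k = k"
    and moves: "\<forall>i\<in>{1..r}. \<exists>x\<in>M i. \<sigma> x \<noteq> x"
    using exists_hom_moving_each[OF assms] by blast
  have "gal_aut K (compositum K (M ` {1..r})) \<sigma>"
    using assms(2) \<sigma> by (rule gal_aut_compositum)
  then show ?thesis
    using moves by blast
qed

end
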